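(* Let $G=\mathbb Z_m*\mathbb Z_n$ with $m\ge2$, $n\ge3$, and define the subspaces of $\ell^2(G)\oplus\ell^2(G)$: $H_1=\{(a,-a): a\in\mathrm{im}(1-p)\cap\mathrm{im}(1-q)\}$, $H_2=\{(c,-c): c\in\mathrm{im}\,p+\mathrm{im}\,q\}$, $\tilde H_2=\{(pw,qv): v,w\in\ell^2(G)\}$, $H_3=\{(b,b): b\in\ell^2(G)\}$, $\tilde H_3=\{((1-p)u,(1-q)u): u\in\ell^2(G)\}$. Then there are orthogonal direct sum decompositions \[\ell^2(G)\oplus\ell^2(G)=H_1\oplus H_2\oplus H_3\qquad\text{and}\qquad \ell^2(G)\oplus\ell^2(G)=H_1\oplus\tilde H_2\oplus\tilde H_3.\]
   Context: $G=\langle s,t\mid s^m,t^n\rangle$; elements of $\mathbb CG$ act on $\ell^2(G)$ by the left regular representation; $p=\frac1m\sum_{0\le i<m}s^i$ and $q=\frac1n\sum_{0\le j<n}t^j$ are the averaging projections of the two factors. *)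

theory Defs
  imports "HOL-Analysis.Analysis" "HOL-Library.Function_Algebras"
begin

text \<open>Model of the free product G = Z_m * Z_n = <s,t | s^m, t^n> by reduced words.
  A letter is a pair (b,k): b = False means s^k (with 0 < k < m),
  b = True means t^k (with 0 < k < n).\<close>

type_synonym word = "(bool \<times> nat) list"

definition ord_of :: "nat \<Rightarrow> nat \<Rightarrow> bool \<Rightarrow> nat" where
  "ord_of m n b = (if b then n else m)"

definition reduced :: "nat \<Rightarrow> nat \<Rightarrow> word \<Rightarrow> bool" where
  "reduced m n w \<longleftrightarrow>
     (\<forall>x\<in>set w. 0 < snd x \<and> snd x < ord_of m n (fst x)) \<and>
     (\<forall>i. Suc i < length w \<longrightarrow> fst (w ! i) \<noteq> fst (w ! Suc i))"

text \<open>Left multiplication of a reduced word by the generator power (s^i if b = False, t^i if b = True).\<close>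
definition gen_mul :: "nat \<Rightarrow> nat \<Rightarrow> bool \<Rightarrow> nat \<Rightarrow> word \<Rightarrow> word" where
  "gen_mul m n b i w =
     (let N = ord_of m n b; j = i mod N in
      if j = 0 then w else
      (case w of
         [] \<Rightarrow> [(b, j)]
       | (c, k) # rest \<Rightarrow>
           if c = b then (let e = (j + k) mod N in if e = 0 then rest else (b, e) # rest)
           else (b, j) # w))"

definition l2 :: "nat \<Rightarrow> nat \<Rightarrow> (word \<Rightarrow> complex) set" where
  "l2 m n = {f. (\<forall>w. \<not> reduced m n w \<longrightarrow> f w = 0) \<and>
                 (\<lambda>w. (cmod (f w))\<^sup>2) summable_on UNIV}"

definition l2_inner :: "(word \<Rightarrow> complex) \<Rightarrow> (word \<Rightarrow> complex) \<Rightarrow> complex" where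
  "l2_inner f g = (\<Sum>\<^sub>\<infinity>w. f w * cnj (g w))"

definition l2sum_inner :: "(word \<Rightarrow> complex) \<times> (word \<Rightarrow> complex) \<Rightarrow>
    (word \<Rightarrow> complex) \<times> (word \<Rightarrow> complex) \<Rightarrow> complex" where
  "l2sum_inner u v = l2_inner (fst u) (fst v) + l2_inner (snd u) (snd v)"

text \<open>Averaging projection over the cyclic factor b, acting by the left regular representation:
  (avg f)(x) = (1/N) \<Sum>_{i<N} (\<lambda>(g^i) f)(x) = (1/N) \<Sum>_{i<N} f(g^{-i} x).\<close>
definition avg :: "nat \<Rightarrow> nat \<Rightarrow> bool \<Rightarrow> (word \<Rightarrow> complex) \<Rightarrow> (word \<Rightarrow> complex)" where
  "avg m n b f = (\<lambda>x. if reduced m n x then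
      (\<Sum>i<ord_of m n b. f (gen_mul m n b (ord_of m n b - i) x)) / of_nat (ord_of m n b)
     else 0)"

definition pP :: "nat \<Rightarrow> nat \<Rightarrow> (word \<Rightarrow> complex) \<Rightarrow> (word \<Rightarrow> complex)" where
  "pP m n = avg m n False"

definition qQ :: "nat \<Rightarrow> nat \<Rightarrow> (word \<Rightarrow> complex) \<Rightarrow> (word \<Rightarrow> complex)" where
  "qQ m n = avg m n True"

definition orth_dsum3 :: "((word \<Rightarrow> complex) \<times> (word \<Rightarrow> complex)) set \<Rightarrow> ((word \<Rightarrow> complex) \<times> (word \<Rightarrow> complex)) set \<Rightarrow> ((word \<Rightarrow> complex) \<times> (word \<Rightarrow> complex)) set \<Rightarrow> ((word \<Rightarrow> complex) \<times> (word \<Rightarrow> complex)) set \<Rightarrow> bool" where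
  "orth_dsum3 V A B C \<longleftrightarrow>
     A \<subseteq> V \<and> B \<subseteq> V \<and> C \<subseteq> V \<and>
     (\<forall>a\<in>A. \<forall>b\<in>B. l2sum_inner a b = 0) \<and>
     (\<forall>a\<in>A. \<forall>c\<in>C. l2sum_inner a c = 0) \<and>
     (\<forall>b\<in>B. \<forall>c\<in>C. l2sum_inner b c = 0) \<and>
     (\<forall>v\<in>V. \<exists>!abc. fst abc \<in> A \<and> fst (snd abc) \<in> B \<and> snd (snd abc) \<in> C \<and>
                      v = fst abc + fst (snd abc) + snd (snd abc))"

end

theory Submission
  imports Defs
begin

text \<open>
  p and q are the orthogonal projections of l2(G) onto the functions invariant under \<langle>s\<rangle>
  and under \<langle>t\<rangle>. Both decompositions are linear algebra once l2(G) splits as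
  (ker p \<inter> ker q) \<oplus> (im p + im q), and this holds because the ranges of p and q meet at a
  positive angle: \<Parallel>p y\<Parallel>^2 \<le> c \<Parallel>y\<Parallel>^2 for y \<in> im q, where c = (2m + 1)(2n + 1) / (6mn) < 1.
  The angle estimate is a weighted Cauchy-Schwarz inequality along the orbits of \<langle>s\<rangle>: a reduced
  word has weight 2 if it starts with a power of s and weight 3 otherwise, so that every
  \<langle>s\<rangle>-orbit has total weight 2m + 1, while every \<langle>t\<rangle>-orbit contains at most one word of
  weight 2. Hence \<Parallel>pqp\<Parallel> \<le> c, the Neumann series for (1 - pq) converges on im p in the
  complete space l2(G), and solving x - pqx = p(z - qz) with x \<in> im p writes
  z = (1 - q)(z - x) + x + q(z - x) with the first summand in ker p \<inter> ker q.
\<close>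

section \<open>Square-summable functions\<close>

lemma infsum_finite_sum:
  fixes g :: "'i \<Rightarrow> 'a \<Rightarrow> 'b::{topological_comm_monoid_add, t2_space}"
  assumes "finite I" and "\<And>i. i \<in> I \<Longrightarrow> g i summable_on A"
  shows "(\<lambda>x. \<Sum>i\<in>I. g i x) summable_on A"
    and "infsum (\<lambda>x. \<Sum>i\<in>I. g i x) A = (\<Sum>i\<in>I. infsum (g i) A)"
  using assms by (induction I rule: finite_induct) (auto simp: summable_on_add infsum_add)

definition square_summable :: "('a \<Rightarrow> complex) \<Rightarrow> bool" where
  "square_summable f \<longleftrightarrow> (\<lambda>x. (cmod (f x))\<^sup>2) summable_on UNIV"

definition norm2 :: "('a \<Rightarrow> complex) \<Rightarrow> real" where
  "norm2 f = (\<Sum>\<^sub>\<infinity>x. (cmod (f x))\<^sup>2)"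

definition l2_norm :: "('a \<Rightarrow> complex) \<Rightarrow> real" where
  "l2_norm f = sqrt (norm2 f)"

lemma square_summable_if_finite_sums_le:
  assumes "\<And>F. finite F \<Longrightarrow> (\<Sum>x\<in>F. (cmod (f x))\<^sup>2) \<le> B"
  shows "square_summable f" and "norm2 f \<le> B"
proof -
  show ss: "square_summable f"
    unfolding square_summable_def
    by (rule nonneg_bdd_above_summable_on) (auto intro!: bdd_aboveI2 assms)
  show "norm2 f \<le> B"
    using ss unfolding square_summable_def norm2_def
    by (rule infsum_le_finite_sums) (rule assms)
qed

lemma sum_le_norm2:
  assumes "square_summable f" and "finite F"
  shows "(\<Sum>x\<in>F. (cmod (f x))\<^sup>2) \<le> norm2 f"
  using assms unfolding square_summable_def norm2_def by (intro finite_sum_le_infsum) auto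

lemma norm2_nonneg: "0 \<le> norm2 f"
  unfolding norm2_def by (rule infsum_nonneg) simp

lemma l2_norm_nonneg: "0 \<le> l2_norm f"
  by (simp add: l2_norm_def norm2_nonneg)

lemma norm2_eq_0_iff:
  assumes "square_summable f"
  shows "norm2 f = 0 \<longleftrightarrow> f = 0"
proof
  assume "norm2 f = 0"
  then have "(cmod (f x))\<^sup>2 = 0" for x
    using assms unfolding norm2_def square_summable_def
    by (intro nonneg_infsum_le_0D[where A = UNIV]) auto
  then show "f = 0" by auto
qed (simp add: norm2_def)

lemma l2_norm_eq_0_iff: "square_summable f \<Longrightarrow> l2_norm f = 0 \<longleftrightarrow> f = 0"
  by (simp add: l2_norm_def norm2_eq_0_iff)

lemma l2_norm_zero [simp]: "l2_norm 0 = 0"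
  by (simp add: l2_norm_def norm2_def)

lemma l2_norm_uminus [simp]: "l2_norm (- f) = l2_norm f"
  by (simp add: l2_norm_def norm2_def)

lemma l2_norm_minus_commute: "l2_norm (f - g) = l2_norm (g - f)"
  by (metis l2_norm_uminus minus_diff_eq)

lemma l2_norm_le_if_norm2_le: "norm2 f \<le> c * norm2 g \<Longrightarrow> 0 \<le> c \<Longrightarrow> l2_norm f \<le> sqrt c * l2_norm g"
  unfolding l2_norm_def by (metis real_sqrt_le_mono real_sqrt_mult)

lemma square_summable_0 [simp]: "square_summable 0"
  by (simp add: square_summable_def)

lemma square_summable_uminus: "square_summable f \<Longrightarrow> square_summable (- f)"
  by (simp add: square_summable_def)

lemma square_summable_scale: "square_summable f \<Longrightarrow> square_summable (\<lambda>x. c * f x)"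
  unfolding square_summable_def by (simp add: norm_mult power_mult_distrib summable_on_cmult_right)

lemma l2_norm_triangle:
  assumes "square_summable f" and "square_summable g"
  shows "square_summable (f + g)" and "l2_norm (f + g) \<le> l2_norm f + l2_norm g"
proof -
  have L2_le: "L2_set (\<lambda>x. cmod (h x)) F \<le> l2_norm h" if "square_summable h" "finite F" for h F
    unfolding L2_set_def l2_norm_def by (rule real_sqrt_le_mono[OF sum_le_norm2[OF that]])
  have "(\<Sum>x\<in>F. (cmod ((f + g) x))\<^sup>2) \<le> (l2_norm f + l2_norm g)\<^sup>2" if "finite F" for F
  proof -
    have "L2_set (\<lambda>x. cmod ((f + g) x)) F \<le> L2_set (\<lambda>x. cmod (f x) + cmod (g x)) F"
      by (rule L2_set_mono) (auto intro: norm_triangle_ineq)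
    also have "\<dots> \<le> L2_set (\<lambda>x. cmod (f x)) F + L2_set (\<lambda>x. cmod (g x)) F"
      by (rule L2_set_triangle_ineq)
    also have "\<dots> \<le> l2_norm f + l2_norm g"
      using L2_le assms that by (intro add_mono) auto
    finally have "sqrt (\<Sum>x\<in>F. (cmod ((f + g) x))\<^sup>2) \<le> l2_norm f + l2_norm g"
      by (simp add: L2_set_def)
    then show ?thesis
      by (rule sqrt_le_D)
  qed
  from square_summable_if_finite_sums_le[OF this]
  show "square_summable (f + g)" and "l2_norm (f + g) \<le> l2_norm f + l2_norm g"
    using l2_norm_nonneg[of f] l2_norm_nonneg[of g]
    by (auto simp: l2_norm_def plus_fun_def intro: real_le_lsqrt)
qed

lemma l2_norm_triangle_diff:
  assumes "square_summable f" and "square_summable g"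
  shows "l2_norm (f - g) \<le> l2_norm f + l2_norm g"
  using l2_norm_triangle(2)[OF assms(1) square_summable_uminus[OF assms(2)]] by simp

lemma square_summable_add: "square_summable f \<Longrightarrow> square_summable g \<Longrightarrow> square_summable (f + g)"
  by (rule l2_norm_triangle(1))

lemma square_summable_diff: "square_summable f \<Longrightarrow> square_summable g \<Longrightarrow> square_summable (f - g)"
  using square_summable_add[of f "- g"] by (simp add: square_summable_uminus)

lemma l2_norm_sum_le:
  assumes "finite J" and "\<And>j. j \<in> J \<Longrightarrow> square_summable (F j)"
  shows "square_summable (\<Sum>j\<in>J. F j)" and "l2_norm (\<Sum>j\<in>J. F j) \<le> (\<Sum>j\<in>J. l2_norm (F j))"
proof -
  from assms have "square_summable (\<Sum>j\<in>J. F j) \<and> l2_norm (\<Sum>j\<in>J. F j) \<le> (\<Sum>j\<in>J. l2_norm (F j))"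
  proof (induction J rule: finite_induct)
    case (insert j J)
    then have IH: "square_summable (\<Sum>j\<in>J. F j)" "l2_norm (\<Sum>j\<in>J. F j) \<le> (\<Sum>j\<in>J. l2_norm (F j))"
      and Fj: "square_summable (F j)"
      by auto
    have "l2_norm (F j + sum F J) \<le> l2_norm (F j) + (\<Sum>j\<in>J. l2_norm (F j))"
      using l2_norm_triangle(2)[OF Fj IH(1)] IH(2) by linarith
    then show ?case
      unfolding sum.insert[OF insert(1,2)] using l2_norm_triangle(1)[OF Fj IH(1)] by blast
  qed simp
  then show "square_summable (\<Sum>j\<in>J. F j)" and "l2_norm (\<Sum>j\<in>J. F j) \<le> (\<Sum>j\<in>J. l2_norm (F j))"
    by auto
qed

lemma norm_le_l2_norm:
  assumes "square_summable f"
  shows "cmod (f x) \<le> l2_norm f"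
  using sum_le_norm2[OF assms, of "{x}"] unfolding l2_norm_def by (simp add: real_le_rsqrt)

lemma l2_norm_le_if_pointwise_limit:
  assumes lim: "\<And>x. (\<lambda>l. F l x) \<longlonglongrightarrow> g x"
    and ss: "\<And>l. K \<le> l \<Longrightarrow> square_summable (F l - h)"
    and bound: "\<And>l. K \<le> l \<Longrightarrow> l2_norm (F l - h) \<le> e" and "0 \<le> e"
  shows "square_summable (g - h)" and "l2_norm (g - h) \<le> e"
proof -
  have "(\<Sum>x\<in>S. (cmod ((g - h) x))\<^sup>2) \<le> e\<^sup>2" if "finite S" for S
  proof (rule tendsto_upperbound)
    show "(\<lambda>l. \<Sum>x\<in>S. (cmod ((F l - h) x))\<^sup>2) \<longlonglongrightarrow> (\<Sum>x\<in>S. (cmod ((g - h) x))\<^sup>2)"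
      by (auto intro!: tendsto_intros lim)
    have "(\<Sum>x\<in>S. (cmod ((F l - h) x))\<^sup>2) \<le> e\<^sup>2" if "K \<le> l" for l
      using sum_le_norm2[OF ss[OF that] \<open>finite S\<close>] sqrt_le_D[of "norm2 (F l - h)" e]
        bound[OF that] unfolding l2_norm_def by linarith
    then show "\<forall>\<^sub>F l in sequentially. (\<Sum>x\<in>S. (cmod ((F l - h) x))\<^sup>2) \<le> e\<^sup>2"
      unfolding eventually_sequentially by blast
  qed simp
  from square_summable_if_finite_sums_le[OF this]
  show "square_summable (g - h)" and "l2_norm (g - h) \<le> e"
    unfolding l2_norm_def using \<open>0 \<le> e\<close> by (simp_all add: real_le_lsqrt fun_diff_def)
qed

lemma square_summable_complete:
  assumes ss: "\<And>k. square_summable (F k)"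
    and cauchy: "\<And>e. 0 < e \<Longrightarrow> \<exists>K. \<forall>k\<ge>K. \<forall>l\<ge>K. l2_norm (F l - F k) \<le> e"
  obtains g where "square_summable g" and "\<And>x. (\<lambda>k. F k x) \<longlonglongrightarrow> g x"
    and "(\<lambda>k. l2_norm (g - F k)) \<longlonglongrightarrow> 0"
proof -
  have ss_diff: "square_summable (F l - F k)" for l k
    using ss ss by (rule square_summable_diff)
  have "Cauchy (\<lambda>k. F k x)" for x
  proof (rule metric_CauchyI)
    fix e :: real assume "0 < e"
    then obtain K where K: "\<forall>k\<ge>K. \<forall>l\<ge>K. l2_norm (F l - F k) \<le> e / 2"
      using cauchy[of "e / 2"] by auto
    have "dist (F l x) (F k x) < e" if "k \<ge> K" "l \<ge> K" for k l
      using norm_le_l2_norm[OF ss_diff, of l k x] K[rule_format, OF that] \<open>0 < e\<close>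
      by (simp add: dist_norm)
    then show "\<exists>M. \<forall>l\<ge>M. \<forall>k\<ge>M. dist (F l x) (F k x) < e" by blast
  qed
  then have lim: "(\<lambda>k. F k x) \<longlonglongrightarrow> lim (\<lambda>k. F k x)" for x
    using Cauchy_convergent convergent_LIMSEQ_iff by blast
  define g where "g x = lim (\<lambda>k. F k x)" for x
  have tail: "square_summable (g - F k) \<and> l2_norm (g - F k) \<le> e"
    if "\<forall>k\<ge>K. \<forall>l\<ge>K. l2_norm (F l - F k) \<le> e" and "K \<le> k" and "0 \<le> e" for e K k
    using l2_norm_le_if_pointwise_limit[of F g K "F k" e] lim ss_diff that unfolding g_def by auto
  obtain K1 where "\<forall>k\<ge>K1. \<forall>l\<ge>K1. l2_norm (F l - F k) \<le> 1"
    using cauchy[of 1] by auto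
  then have "square_summable (g - F K1 + F K1)"
    using tail[of K1 1 K1] ss by (intro square_summable_add) auto
  then have "square_summable g" by simp
  moreover have "(\<lambda>k. l2_norm (g - F k)) \<longlonglongrightarrow> 0"
  proof (rule LIMSEQ_I)
    fix r :: real assume "0 < r"
    then obtain K where K: "\<forall>k\<ge>K. \<forall>l\<ge>K. l2_norm (F l - F k) \<le> r / 2"
      using cauchy[of "r / 2"] by auto
    have "norm (l2_norm (g - F k) - 0) < r" if "k \<ge> K" for k
      using tail[OF K that] \<open>0 < r\<close> l2_norm_nonneg[of "g - F k"] by simp
    then show "\<exists>K. \<forall>k\<ge>K. norm (l2_norm (g - F k) - 0) < r" by blast
  qed
  ultimately show thesis
    using that lim unfolding g_def by blast
qed

lemma sum_power_tail_le:
  fixes c :: real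
  assumes "0 \<le> c" and "c < 1"
  shows "(\<Sum>j\<in>{k..<l}. c ^ j) \<le> c ^ k / (1 - c)"
proof -
  have "(\<Sum>j\<in>{k..<l}. c ^ j) = c ^ k * (\<Sum>i<l - k. c ^ i)"
    by (simp add: sum.atLeastLessThan_shift_0[of _ k] power_add sum_distrib_left atLeast0LessThan)
  also have "\<dots> = c ^ k * (1 - c ^ (l - k)) / (1 - c)"
    using assms by (simp add: sum_gp_strict)
  also have "\<dots> \<le> c ^ k / (1 - c)"
    using assms by (intro divide_right_mono) (simp_all add: mult_left_le)
  finally show ?thesis .
qed

lemma cauchy_if_geometric_tail:
  fixes X :: "nat \<Rightarrow> 'a \<Rightarrow> complex"
  assumes tail: "\<And>k l. k \<le> l \<Longrightarrow> l2_norm (X l - X k) \<le> c ^ k * B"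
    and c: "0 \<le> c" "c < 1" and B: "0 \<le> B" and "0 < e"
  shows "\<exists>K. \<forall>k\<ge>K. \<forall>l\<ge>K. l2_norm (X l - X k) \<le> e"
proof -
  have "(\<lambda>k. c ^ k * B) \<longlonglongrightarrow> 0"
    using c by (intro tendsto_mult_left_zero LIMSEQ_power_zero) simp
  from order_tendstoD(2)[OF this \<open>0 < e\<close>] obtain K where K: "c ^ K * B \<le> e"
    unfolding eventually_sequentially by (meson less_imp_le order_refl)
  have small: "c ^ i * B \<le> e" if "K \<le> i" for i
    using K mult_right_mono[OF power_decreasing[OF that c(1)] B] c by linarith
  have "l2_norm (X l - X k) \<le> e" if "K \<le> k" "K \<le> l" for k l
  proof (cases "k \<le> l")
    case True
    then show ?thesis using tail[OF True] small[OF \<open>K \<le> k\<close>] by linarith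
  next
    case False
    then show ?thesis
      using tail[of l k] small[OF \<open>K \<le> l\<close>] l2_norm_minus_commute[of "X l" "X k"] by linarith
  qed
  then show ?thesis by blast
qed

lemma l2_inner_summable:
  assumes "square_summable f" and "square_summable g"
  shows "(\<lambda>x. f x * cnj (g x)) summable_on UNIV"
proof (rule abs_summable_summable)
  have bound: "norm (f x * cnj (g x)) \<le> ((cmod (f x))\<^sup>2 + (cmod (g x))\<^sup>2) * (1 / 2)" for x
    using sum_squares_bound[of "cmod (f x)" "cmod (g x)"] by (simp add: norm_mult)
  have "(\<lambda>x. ((cmod (f x))\<^sup>2 + (cmod (g x))\<^sup>2) * (1 / 2)) summable_on UNIV"
    using assms unfolding square_summable_def by (intro summable_on_cmult_left summable_on_add)
  then show "(\<lambda>x. norm (f x * cnj (g x))) summable_on UNIV"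
    by (rule summable_on_comparison_test) (use bound in auto)
qed

lemma l2_inner_add_left:
  "square_summable f \<Longrightarrow> square_summable g \<Longrightarrow> square_summable h \<Longrightarrow>
    l2_inner (f + g) h = l2_inner f h + l2_inner g h"
  unfolding l2_inner_def plus_fun_apply distrib_right by (intro infsum_add l2_inner_summable)

lemma l2_inner_commute: "l2_inner g f = cnj (l2_inner f g)"
  unfolding l2_inner_def infsum_cnj[symmetric] by (simp add: mult.commute)

lemma l2_inner_add_right:
  "square_summable f \<Longrightarrow> square_summable g \<Longrightarrow> square_summable h \<Longrightarrow>
    l2_inner f (g + h) = l2_inner f g + l2_inner f h"
  by (simp add: l2_inner_commute[of f] l2_inner_add_left)

lemma l2_inner_uminus_left [simp]: "l2_inner (- f) g = - l2_inner f g"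
  unfolding l2_inner_def by (simp add: infsum_uminus)

lemma l2_inner_uminus_right [simp]: "l2_inner f (- g) = - l2_inner f g"
  unfolding l2_inner_def by (simp add: infsum_uminus)

lemma l2_inner_zero_right [simp]: "l2_inner f 0 = 0"
  by (simp add: l2_inner_def)

lemma l2_inner_diff_right:
  "square_summable f \<Longrightarrow> square_summable g \<Longrightarrow> square_summable h \<Longrightarrow>
    l2_inner f (g - h) = l2_inner f g - l2_inner f h"
  using l2_inner_add_right[of f g "- h"] by (simp add: square_summable_uminus)

lemma l2_inner_scale_left: "l2_inner (\<lambda>x. c * f x) g = c * l2_inner f g"
  unfolding l2_inner_def by (simp add: mult.assoc infsum_cmult_right')

lemma l2_inner_scale_right: "l2_inner f (\<lambda>x. c * g x) = cnj c * l2_inner f g"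
proof -
  have "l2_inner f (\<lambda>x. c * g x) = (\<Sum>\<^sub>\<infinity>x. cnj c * (f x * cnj (g x)))"
    unfolding l2_inner_def by (simp add: algebra_simps)
  then show ?thesis
    unfolding l2_inner_def by (simp add: infsum_cmult_right')
qed

lemma l2_inner_sum_left:
  assumes "finite I" and "\<And>i. i \<in> I \<Longrightarrow> square_summable (F i)" and "square_summable g"
  shows "l2_inner (\<lambda>x. \<Sum>i\<in>I. F i x) g = (\<Sum>i\<in>I. l2_inner (F i) g)"
  using infsum_finite_sum(2)[of I "\<lambda>i x. F i x * cnj (g x)" UNIV] assms
  by (simp add: l2_inner_def sum_distrib_right l2_inner_summable)

lemma l2_inner_sum_right:
  assumes "finite I" and "\<And>i. i \<in> I \<Longrightarrow> square_summable (F i)" and "square_summable g"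
  shows "l2_inner g (\<lambda>x. \<Sum>i\<in>I. F i x) = (\<Sum>i\<in>I. l2_inner g (F i))"
  by (simp add: l2_inner_commute[of g] l2_inner_sum_left[OF assms])

lemma l2_inner_self: "square_summable f \<Longrightarrow> l2_inner f f = of_real (norm2 f)"
proof -
  assume "square_summable f"
  then have "((\<lambda>x. (cmod (f x))\<^sup>2) has_sum norm2 f) UNIV"
    by (simp add: square_summable_def norm2_def has_sum_infsum)
  then have "((\<lambda>x. complex_of_real ((cmod (f x))\<^sup>2)) has_sum of_real (norm2 f)) UNIV"
    by (rule has_sum_of_real)
  then show ?thesis
    unfolding l2_inner_def complex_norm_square by (rule infsumI)
qed

lemma weighted_cauchy_schwarz:
  fixes a :: "'i \<Rightarrow> complex"
  assumes "finite I" and "\<And>i. i \<in> I \<Longrightarrow> 0 < \<omega> i"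
  shows "(cmod (\<Sum>i\<in>I. a i))\<^sup>2 \<le> (\<Sum>i\<in>I. \<omega> i) * (\<Sum>i\<in>I. (cmod (a i))\<^sup>2 / \<omega> i)"
proof -
  have "(cmod (\<Sum>i\<in>I. a i))\<^sup>2 \<le> (\<Sum>i\<in>I. cmod (a i))\<^sup>2"
    by (simp add: norm_sum power_mono)
  also have "(\<Sum>i\<in>I. cmod (a i)) = (\<Sum>i\<in>I. sqrt (\<omega> i) * (cmod (a i) / sqrt (\<omega> i)))"
  proof (rule sum.cong[OF refl])
    fix i assume "i \<in> I"
    then have "0 < sqrt (\<omega> i)" using assms(2) by simp
    then show "cmod (a i) = sqrt (\<omega> i) * (cmod (a i) / sqrt (\<omega> i))" by simp
  qed
  also have "(\<dots>)\<^sup>2 \<le> (\<Sum>i\<in>I. (sqrt (\<omega> i))\<^sup>2) * (\<Sum>i\<in>I. (cmod (a i) / sqrt (\<omega> i))\<^sup>2)"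
    by (rule Cauchy_Schwarz_ineq_sum)
  also have "\<dots> = (\<Sum>i\<in>I. \<omega> i) * (\<Sum>i\<in>I. (cmod (a i))\<^sup>2 / \<omega> i)"
    using assms(2) by (intro arg_cong2[where f = "(*)"] sum.cong) (auto simp: power_divide less_imp_le)
  finally show ?thesis .
qed

section \<open>Reduced words\<close>

definition starts_with :: "bool \<Rightarrow> word \<Rightarrow> bool" where
  "starts_with b w \<longleftrightarrow> w \<noteq> [] \<and> fst (hd w) = b"

definition prepend :: "bool \<Rightarrow> nat \<Rightarrow> word \<Rightarrow> word" where
  "prepend b e w = (if e = 0 then w else (b, e) # w)"

definition strip :: "bool \<Rightarrow> word \<Rightarrow> word" where
  "strip b w = (if starts_with b w then tl w else w)"

definition lead_exp :: "bool \<Rightarrow> word \<Rightarrow> nat" where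
  "lead_exp b w = (if starts_with b w then snd (hd w) else 0)"

lemma bij_betw_add_mod:
  fixes K k :: nat
  assumes "0 < K"
  shows "bij_betw (\<lambda>i. (i + k) mod K) {..<K} {..<K}"
proof -
  have "(i + k) mod K = (j + k) mod K \<longleftrightarrow> i mod K = j mod K" for i j
    using nat_mod_eq_iff by auto
  then have "inj_on (\<lambda>i. (i + k) mod K) {..<K}"
    by (auto intro!: inj_onI)
  moreover have "(\<lambda>i. (i + k) mod K) ` {..<K} \<subseteq> {..<K}"
    using assms by auto
  ultimately show ?thesis
    by (simp add: bij_betw_def endo_inj_surj)
qed

lemma sum_lessThan_reflect_periodic:
  fixes h :: "nat \<Rightarrow> 'a::ab_group_add"
  assumes "h K = h 0"
  shows "(\<Sum>i<K. h (K - i)) = (\<Sum>i<K. h i)"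
proof -
  have "(\<Sum>i<K. h (K - i)) = (\<Sum>i<K. h (Suc i))"
    using sum.nat_diff_reindex[of "\<lambda>i. h (Suc i)" K] by (simp add: Suc_diff_Suc)
  also have "\<dots> = (\<Sum>i<K. h i)"
    using sum.lessThan_Suc_shift[of h K] sum.lessThan_Suc[of h K] assms by simp
  finally show ?thesis .
qed

locale free_product =
  fixes m n :: nat
  assumes m_pos: "0 < m" and n_pos: "0 < n"
begin

abbreviation ord :: "bool \<Rightarrow> nat" where "ord b \<equiv> ord_of m n b"
abbreviation red :: "word \<Rightarrow> bool" where "red \<equiv> reduced m n"
abbreviation act :: "bool \<Rightarrow> nat \<Rightarrow> word \<Rightarrow> word" where "act \<equiv> gen_mul m n"

lemma ord_pos: "0 < ord b"
  using m_pos n_pos by (simp add: ord_of_def)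

lemma reduced_Cons:
  "red (x # w) \<longleftrightarrow>
     0 < snd x \<and> snd x < ord (fst x) \<and> red w \<and> (w \<noteq> [] \<longrightarrow> fst x \<noteq> fst (hd w))"
proof -
  have "(\<forall>i. Suc i < length (x # w) \<longrightarrow> fst ((x # w) ! i) \<noteq> fst ((x # w) ! Suc i)) \<longleftrightarrow>
        (w \<noteq> [] \<longrightarrow> fst x \<noteq> fst (hd w)) \<and>
        (\<forall>i. Suc i < length w \<longrightarrow> fst (w ! i) \<noteq> fst (w ! Suc i))"
    by (cases w) (auto simp: All_less_Suc2 nth_Cons split: nat.splits)
  then show ?thesis
    unfolding reduced_def by auto
qed

lemma
  assumes "red w"
  shows reduced_prepend_strip: "prepend b (lead_exp b w) (strip b w) = w"
    and lead_exp_less: "lead_exp b w < ord b"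
    and not_starts_with_strip: "\<not> starts_with b (strip b w)"
    and reduced_strip: "red (strip b w)"
  using assms ord_pos[of b]
  by (cases w; cases "hd w"; cases "tl w";
      auto simp: prepend_def lead_exp_def strip_def starts_with_def reduced_Cons)+

lemma
  assumes "\<not> starts_with b u" and "e < ord b"
  shows reduced_prepend: "red u \<Longrightarrow> red (prepend b e u)"
    and strip_prepend: "strip b (prepend b e u) = u"
  using assms by (cases u; auto simp: prepend_def reduced_Cons starts_with_def strip_def)+

lemma gen_mul_prepend:
  assumes "\<not> starts_with b u" and "k < ord b"
  shows "act b c (prepend b k u) = prepend b ((c + k) mod ord b) u"
proof (cases "c mod ord b = 0")
  case True
  then have "(c + k) mod ord b = k"
    using assms(2) by (simp add: mod_add_left_eq[symmetric])
  with True show ?thesis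
    by (simp add: gen_mul_def Let_def)
next
  case False
  have "(c mod ord b + k) mod ord b = (c + k) mod ord b"
    by (simp add: mod_add_left_eq)
  with False assms(1) show ?thesis
    by (cases u) (auto simp: gen_mul_def Let_def prepend_def starts_with_def split: prod.splits)
qed

lemma act_eq:
  assumes "red w"
  shows "act b c w = prepend b ((c + lead_exp b w) mod ord b) (strip b w)"
  using gen_mul_prepend[OF not_starts_with_strip lead_exp_less, OF assms assms]
  by (simp add: reduced_prepend_strip[OF assms])

lemma
  assumes "red w"
  shows reduced_act: "red (act b c w)"
    and strip_act: "strip b (act b c w) = strip b w"
  unfolding act_eq[OF assms]
  using assms ord_pos[of b]
  by (simp_all add: reduced_prepend strip_prepend not_starts_with_strip reduced_strip)

lemma act_act:
  assumes "red w"
  shows "act b a (act b c w) = act b ((a + c) mod ord b) w"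
  using gen_mul_prepend[OF not_starts_with_strip[OF assms] mod_less_divisor[OF ord_pos]] assms
  by (simp add: act_eq mod_add_left_eq mod_add_right_eq add.assoc)

lemma act_mod_ord:
  assumes "red w"
  shows "act b (i mod ord b) w = act b i w"
  using assms by (simp add: act_eq mod_add_left_eq)

lemma act_0:
  assumes "red w"
  shows "act b 0 w = w"
  using assms by (simp add: act_eq lead_exp_less reduced_prepend_strip)

lemma act_inverse:
  assumes "red w"
  shows "act b (ord b - i mod ord b) (act b i w) = w"
    and "act b i (act b (ord b - i mod ord b) w) = w"
proof -
  have "(ord b - i mod ord b + i) mod ord b = 0"
    using ord_pos[of b] by (metis add.commute mod_add_left_eq le_add_diff_inverse
        mod_less_divisor mod_self less_imp_le)
  then show "act b (ord b - i mod ord b) (act b i w) = w"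
    and "act b i (act b (ord b - i mod ord b) w) = w"
    using assms by (simp_all add: act_act act_0 add.commute)
qed

lemma bij_betw_act: "bij_betw (act b i) {w. red w} {w. red w}"
  by (rule bij_betw_byWitness[where f' = "act b (ord b - i mod ord b)"])
     (auto intro: reduced_act act_inverse)

lemma sum_orbit:
  assumes "red w"
  shows "(\<Sum>i<ord b. g (act b i w)) = g (strip b w) + (\<Sum>e\<in>{1..<ord b}. g ((b, e) # strip b w))"
proof -
  have "(\<Sum>i<ord b. g (act b i w)) = (\<Sum>e<ord b. g (prepend b e (strip b w)))"
    using sum.reindex_bij_betw[OF bij_betw_add_mod[OF ord_pos, of "lead_exp b w" b],
        of "\<lambda>e. g (prepend b e (strip b w))"]
    by (simp add: act_eq[OF assms])
  also have "\<dots> = g (strip b w) + (\<Sum>e\<in>{1..<ord b}. g ((b, e) # strip b w))"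
    using ord_pos[of b]
    by (simp add: sum.atLeast1_atMost_eq lessThan_atLeast0 sum.atLeast_Suc_lessThan prepend_def)
  finally show ?thesis .
qed

lemma sum_orbit_act:
  assumes "red w"
  shows "(\<Sum>i<ord b. g (act b i (act b j w))) = (\<Sum>i<ord b. g (act b i w))"
  using assms by (simp add: sum_orbit reduced_act strip_act)

lemma sum_orbit_reflect:
  fixes g :: "word \<Rightarrow> 'a::ab_group_add"
  assumes "red w"
  shows "(\<Sum>i<ord b. g (act b (ord b - i) w)) = (\<Sum>i<ord b. g (act b i w))"
  using sum_lessThan_reflect_periodic[of "\<lambda>i. g (act b i w)"] assms
  by (simp add: act_mod_ord[OF assms, of b "ord b", symmetric])

end

section \<open>The averaging projections\<close>

text \<open>\<open>translate m n b i f\<close> is \<open>\<lambda>(g\<^sup>-\<^sup>i) f\<close> for the generator \<open>g\<close> of factor \<open>b\<close>.\<close>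

definition translate :: "nat \<Rightarrow> nat \<Rightarrow> bool \<Rightarrow> nat \<Rightarrow> (word \<Rightarrow> complex) \<Rightarrow> word \<Rightarrow> complex" where
  "translate m n b i f = (\<lambda>x. if reduced m n x then f (gen_mul m n b i x) else 0)"

context free_product
begin

abbreviation L :: "(word \<Rightarrow> complex) set" where "L \<equiv> l2 m n"

lemma l2_iff: "f \<in> L \<longleftrightarrow> (\<forall>w. \<not> red w \<longrightarrow> f w = 0) \<and> square_summable f"
  by (simp add: l2_def square_summable_def)

lemma l2_square_summable: "f \<in> L \<Longrightarrow> square_summable f"
  by (simp add: l2_iff)

lemma l2_zero_outside: "f \<in> L \<Longrightarrow> \<not> red w \<Longrightarrow> f w = 0"
  by (simp add: l2_iff)

lemma l2_0: "0 \<in> L"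
  by (simp add: l2_iff)

lemma l2_add: "f \<in> L \<Longrightarrow> g \<in> L \<Longrightarrow> f + g \<in> L"
  by (simp add: l2_iff square_summable_add)

lemma l2_uminus: "f \<in> L \<Longrightarrow> - f \<in> L"
  by (simp add: l2_iff square_summable_uminus)

lemma l2_diff: "f \<in> L \<Longrightarrow> g \<in> L \<Longrightarrow> f - g \<in> L"
  by (simp add: l2_iff square_summable_diff)

lemma l2_scale: "f \<in> L \<Longrightarrow> (\<lambda>x. c * f x) \<in> L"
  by (simp add: l2_iff square_summable_scale)

lemma l2_sum: "finite J \<Longrightarrow> (\<And>j. j \<in> J \<Longrightarrow> F j \<in> L) \<Longrightarrow> (\<Sum>j\<in>J. F j) \<in> L"
  by (induction J rule: finite_induct) (auto intro: l2_0 l2_add)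

lemma l2_complete:
  assumes "\<And>k. F k \<in> L"
    and "\<And>e. 0 < e \<Longrightarrow> \<exists>K. \<forall>k\<ge>K. \<forall>l\<ge>K. l2_norm (F l - F k) \<le> e"
  obtains g where "g \<in> L" and "(\<lambda>k. l2_norm (g - F k)) \<longlonglongrightarrow> 0"
proof -
  obtain g where g: "square_summable g" "\<And>x. (\<lambda>k. F k x) \<longlonglongrightarrow> g x"
    "(\<lambda>k. l2_norm (g - F k)) \<longlonglongrightarrow> 0"
    using square_summable_complete[of F] assms l2_square_summable by metis
  have "g x = 0" if "\<not> red x" for x
  proof -
    have "(\<lambda>k. F k x) = (\<lambda>k. 0)"
      using assms(1) l2_zero_outside[OF _ that] by blast
    then show ?thesis
      using g(2)[of x] by (simp add: LIMSEQ_const_iff)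
  qed
  with g that show thesis by (auto simp: l2_iff)
qed

lemma infsum_act:
  fixes h :: "word \<Rightarrow> 'a::{comm_monoid_add, t2_space}"
  assumes "\<And>x. \<not> red x \<Longrightarrow> h x = 0"
  shows "(\<lambda>x. if red x then h (act b i x) else 0) summable_on UNIV \<longleftrightarrow> h summable_on UNIV"
    and "infsum (\<lambda>x. if red x then h (act b i x) else 0) UNIV = infsum h UNIV"
proof -
  have "(\<lambda>x. if red x then h (act b i x) else 0) summable_on UNIV \<longleftrightarrow>
      (\<lambda>x. h (act b i x)) summable_on {x. red x}"
    by (rule summable_on_cong_neutral) auto
  also have "\<dots> \<longleftrightarrow> h summable_on {x. red x}"
    by (rule summable_on_reindex_bij_betw[OF bij_betw_act])
  also have "\<dots> \<longleftrightarrow> h summable_on UNIV"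
    by (rule summable_on_cong_neutral) (auto simp: assms)
  finally show "(\<lambda>x. if red x then h (act b i x) else 0) summable_on UNIV \<longleftrightarrow> h summable_on UNIV" .
  have "infsum (\<lambda>x. if red x then h (act b i x) else 0) UNIV = infsum (\<lambda>x. h (act b i x)) {x. red x}"
    by (rule infsum_cong_neutral) auto
  also have "\<dots> = infsum h {x. red x}"
    by (rule infsum_reindex_bij_betw[OF bij_betw_act])
  also have "\<dots> = infsum h UNIV"
    by (rule infsum_cong_neutral) (auto simp: assms)
  finally show "infsum (\<lambda>x. if red x then h (act b i x) else 0) UNIV = infsum h UNIV" .
qed

lemma infsum_orbit_sum:
  fixes h :: "word \<Rightarrow> real"
  assumes "\<And>x. \<not> red x \<Longrightarrow> h x = 0" and "h summable_on UNIV"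
  shows "(\<lambda>x. if red x then \<Sum>i<ord b. h (act b i x) else 0) summable_on UNIV"
    and "(\<Sum>\<^sub>\<infinity>x. if red x then \<Sum>i<ord b. h (act b i x) else 0) = ord b * infsum h UNIV"
proof -
  have eq: "(\<lambda>x. if red x then \<Sum>i<ord b. h (act b i x) else 0) =
      (\<lambda>x. \<Sum>i<ord b. if red x then h (act b i x) else 0)"
    by auto
  have "(\<lambda>x. if red x then h (act b i x) else 0) summable_on UNIV" for i
    using infsum_act(1)[of h b i] assms by blast
  note orbit = infsum_finite_sum[of "{..<ord b}", OF _ this]
  show "(\<lambda>x. if red x then \<Sum>i<ord b. h (act b i x) else 0) summable_on UNIV"
    unfolding eq using orbit(1) by simp
  show "(\<Sum>\<^sub>\<infinity>x. if red x then \<Sum>i<ord b. h (act b i x) else 0) = ord b * infsum h UNIV"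
    unfolding eq using orbit(2) infsum_act(2)[of h b] assms(1) by simp
qed

lemma translate_l2:
  assumes "f \<in> L"
  shows "translate m n b i f \<in> L"
proof -
  have "(\<lambda>x. (cmod (translate m n b i f x))\<^sup>2) = (\<lambda>x. if red x then (cmod (f (act b i x)))\<^sup>2 else 0)"
    by (auto simp: translate_def)
  then show ?thesis
    using assms infsum_act(1)[of "\<lambda>x. (cmod (f x))\<^sup>2" b i]
    by (auto simp: l2_iff square_summable_def translate_def)
qed

lemma avg_eq: "avg m n b f x = (if red x then (\<Sum>i<ord b. f (act b i x)) / ord b else 0)"
  unfolding avg_def using sum_orbit_reflect[of x f b] by simp

lemma avg_eq_translate: "avg m n b f = (\<lambda>x. (1 / ord b) * (\<Sum>i<ord b. translate m n b i f x))"
  by (auto simp: avg_eq translate_def)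

lemma norm_avg_sq_le_weighted:
  assumes "red x" and \<omega>_pos: "\<And>y. 0 < \<omega> y" and \<omega>_orbit: "(\<Sum>i<ord b. \<omega> (act b i x)) \<le> W"
  shows "(cmod (avg m n b f x))\<^sup>2 \<le> W / (ord b)\<^sup>2 * (\<Sum>i<ord b. (cmod (f (act b i x)))\<^sup>2 / \<omega> (act b i x))"
proof -
  have "(cmod (\<Sum>i<ord b. f (act b i x)))\<^sup>2 \<le>
      (\<Sum>i<ord b. \<omega> (act b i x)) * (\<Sum>i<ord b. (cmod (f (act b i x)))\<^sup>2 / \<omega> (act b i x))"
    by (rule weighted_cauchy_schwarz) (simp_all add: \<omega>_pos)
  also have "\<dots> \<le> W * (\<Sum>i<ord b. (cmod (f (act b i x)))\<^sup>2 / \<omega> (act b i x))"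
    using \<omega>_pos by (intro mult_right_mono[OF \<omega>_orbit] sum_nonneg) (simp add: less_imp_le)
  finally show ?thesis
    using \<open>red x\<close> ord_pos[of b] by (simp add: avg_eq norm_divide power_divide field_simps)
qed

lemma norm2_avg_le_weighted:
  assumes "f \<in> L" and \<omega>_ge: "\<And>x. 1 \<le> \<omega> x"
    and \<omega>_orbit: "\<And>x. red x \<Longrightarrow> (\<Sum>i<ord b. \<omega> (act b i x)) \<le> W"
  shows "avg m n b f \<in> L" and "norm2 (avg m n b f) \<le> W / ord b * (\<Sum>\<^sub>\<infinity>x. (cmod (f x))\<^sup>2 / \<omega> x)"
proof -
  define h where "h = (\<lambda>x. (cmod (f x))\<^sup>2 / \<omega> x)"
  define G where "G x = (if red x then \<Sum>i<ord b. h (act b i x) else 0)" for x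
  have \<omega>_pos: "0 < \<omega> x" for x
    using \<omega>_ge[of x] by linarith
  have "h summable_on UNIV"
  proof (rule summable_on_comparison_test)
    show "(\<lambda>x. (cmod (f x))\<^sup>2) summable_on UNIV"
      using assms(1) by (simp add: l2_iff square_summable_def)
    show "h x \<le> (cmod (f x))\<^sup>2" for x
      using \<omega>_ge[of x] \<omega>_pos[of x] by (simp add: h_def divide_le_eq mult_le_cancel_left1)
  qed (simp add: h_def \<omega>_pos less_imp_le)
  moreover have "\<not> red x \<Longrightarrow> h x = 0" for x
    using assms(1) by (simp add: h_def l2_zero_outside)
  ultimately have G_summable: "G summable_on UNIV" and G_sum: "infsum G UNIV = ord b * infsum h UNIV"
    unfolding G_def using infsum_orbit_sum by blast+
  have ord_pos': "0 < real (ord b)"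
    using ord_pos[of b] by simp
  have pointwise: "(cmod (avg m n b f x))\<^sup>2 \<le> G x * (W / (ord b)\<^sup>2)" for x
    using norm_avg_sq_le_weighted[OF _ \<omega>_pos \<omega>_orbit, of x f]
    by (cases "red x") (simp_all add: avg_eq G_def h_def mult.commute)
  have scaled: "(\<lambda>x. G x * (W / (ord b)\<^sup>2)) summable_on UNIV"
    by (rule summable_on_cmult_left[OF G_summable])
  have summable: "(\<lambda>x. (cmod (avg m n b f x))\<^sup>2) summable_on UNIV"
    by (rule summable_on_comparison_test[OF scaled]) (use pointwise in auto)
  then show "avg m n b f \<in> L"
    by (simp add: l2_iff square_summable_def avg_eq)
  have "norm2 (avg m n b f) \<le> (\<Sum>\<^sub>\<infinity>x. G x * (W / (ord b)\<^sup>2))"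
    unfolding norm2_def
    by (rule infsum_mono[OF summable scaled]) (rule pointwise)
  also have "\<dots> = infsum G UNIV * (W / (ord b)\<^sup>2)"
    by (rule infsum_cmult_left) (rule G_summable)
  also have "\<dots> = W / ord b * infsum h UNIV"
    using G_sum ord_pos' by (simp add: power2_eq_square)
  finally show "norm2 (avg m n b f) \<le> W / ord b * (\<Sum>\<^sub>\<infinity>x. (cmod (f x))\<^sup>2 / \<omega> x)"
    by (simp add: h_def)
qed

lemma avg_l2: "f \<in> L \<Longrightarrow> avg m n b f \<in> L"
  using norm2_avg_le_weighted(1)[of f "\<lambda>_. 1" b "ord b"] by simp

lemma l2_norm_avg_le: "f \<in> L \<Longrightarrow> l2_norm (avg m n b f) \<le> l2_norm f"
  using norm2_avg_le_weighted(2)[of f "\<lambda>_. 1" b "ord b"] ord_pos[of b]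
  by (simp add: l2_norm_def norm2_def)

lemma avg_add: "avg m n b (f + g) = avg m n b f + avg m n b g"
  by (rule ext) (simp add: avg_eq sum.distrib add_divide_distrib)

lemma additive_avg: "Modules.additive (avg m n b)"
  by unfold_locales (rule avg_add)

lemma avg_diff: "avg m n b (f - g) = avg m n b f - avg m n b g"
  by (rule Modules.additive.diff[OF additive_avg])

lemma avg_act: "red x \<Longrightarrow> avg m n b f (act b j x) = avg m n b f x"
  by (simp add: avg_eq reduced_act sum_orbit_act)

lemma avg_fixed:
  assumes "f \<in> L" and "\<And>x j. red x \<Longrightarrow> f (act b j x) = f x"
  shows "avg m n b f = f"
proof
  fix x
  show "avg m n b f x = f x"
    using assms ord_pos[of b] by (cases "red x") (simp_all add: avg_eq l2_zero_outside)
qed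

lemma avg_idem: "f \<in> L \<Longrightarrow> avg m n b (avg m n b f) = avg m n b f"
  by (rule avg_fixed[OF avg_l2 avg_act])

lemma avg_diff_self: "u \<in> L \<Longrightarrow> avg m n b (u - avg m n b u) = 0"
  by (simp add: avg_diff avg_idem)

lemma image_diff_avg_iff: "a \<in> (\<lambda>u. u - avg m n b u) ` L \<longleftrightarrow> a \<in> L \<and> avg m n b a = 0"
proof
  assume "a \<in> (\<lambda>u. u - avg m n b u) ` L"
  then show "a \<in> L \<and> avg m n b a = 0"
    by (auto intro: l2_diff avg_l2 simp: avg_diff_self)
next
  assume "a \<in> L \<and> avg m n b a = 0"
  then show "a \<in> (\<lambda>u. u - avg m n b u) ` L"
    by (intro image_eqI[where x = a]) auto
qed

lemma translate_adjoint:
  assumes "f \<in> L"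
  shows "l2_inner (translate m n b i f) g = l2_inner f (translate m n b (ord b - i mod ord b) g)"
proof -
  define H where "H = (\<lambda>x. f x * cnj (translate m n b (ord b - i mod ord b) g x))"
  have "l2_inner (translate m n b i f) g = (\<Sum>\<^sub>\<infinity>x. if red x then H (act b i x) else 0)"
    unfolding l2_inner_def
    by (rule infsum_cong) (auto simp: H_def translate_def reduced_act act_inverse)
  also have "\<dots> = infsum H UNIV"
    using assms by (intro infsum_act(2)) (simp add: H_def l2_zero_outside)
  finally show ?thesis
    unfolding H_def l2_inner_def .
qed

lemma avg_self_adjoint:
  assumes "f \<in> L" and "g \<in> L"
  shows "l2_inner (avg m n b f) g = l2_inner f (avg m n b g)"
proof -
  have ss: "square_summable (translate m n b i h)" if "h \<in> L" for i h
    using translate_l2[OF that] by (rule l2_square_summable)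
  have reflect: "(\<lambda>x. \<Sum>i<ord b. translate m n b (ord b - i) g x) = (\<lambda>x. \<Sum>i<ord b. translate m n b i g x)"
  proof
    fix x
    show "(\<Sum>i<ord b. translate m n b (ord b - i) g x) = (\<Sum>i<ord b. translate m n b i g x)"
      by (cases "red x") (simp_all add: translate_def sum_orbit_reflect)
  qed
  have "l2_inner (avg m n b f) g = (1 / ord b) * (\<Sum>i<ord b. l2_inner (translate m n b i f) g)"
    unfolding avg_eq_translate l2_inner_scale_left
    using assms by (simp add: l2_inner_sum_left ss l2_square_summable)
  also have "\<dots> = (1 / ord b) * (\<Sum>i<ord b. l2_inner f (translate m n b (ord b - i) g))"
    using translate_adjoint[OF assms(1)] by simp
  also have "\<dots> = (1 / ord b) * l2_inner f (\<lambda>x. \<Sum>i<ord b. translate m n b (ord b - i) g x)"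
    using assms by (simp add: l2_inner_sum_right ss l2_square_summable)
  also have "\<dots> = l2_inner f (avg m n b g)"
    unfolding avg_eq_translate l2_inner_scale_right reflect by simp
  finally show ?thesis .
qed

lemma avg_orthogonal: "a \<in> L \<Longrightarrow> avg m n b a = 0 \<Longrightarrow> w \<in> L \<Longrightarrow> l2_inner a (avg m n b w) = 0"
  using avg_self_adjoint[of a w b] by (simp add: l2_inner_def)

end

section \<open>The angle between the ranges of \<open>p\<close> and \<open>q\<close>\<close>

definition weight :: "bool \<Rightarrow> word \<Rightarrow> real" where
  "weight b w = (if starts_with b w then 2 else 3)"

text \<open>For factors of orders at least 2 this is below 1 unless \<open>m = n = 2\<close>.\<close>

definition cos2_bound :: "nat \<Rightarrow> nat \<Rightarrow> real" where
  "cos2_bound m n = (2 * m + 1) * (2 * n + 1) / (6 * m * n)"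

lemma cos2_bound_less_1:
  assumes "2 \<le> m" and "3 \<le> n"
  shows "cos2_bound m n < 1"
proof -
  have "1 * 2 \<le> (real m - 1) * (real n - 1)"
    using assms by (intro mult_mono) auto
  then show ?thesis
    using assms by (simp add: cos2_bound_def algebra_simps)
qed

context free_product
begin

lemma sum_weight_orbit:
  assumes "red w"
  shows "(\<Sum>i<ord b. weight b (act b i w)) = 2 * ord b + 1"
  unfolding sum_orbit[OF assms]
  using not_starts_with_strip[OF assms, of b] ord_pos[of b]
  by (simp add: weight_def starts_with_def of_nat_diff)

lemma sum_inverse_weight_orbit:
  assumes "red w"
  shows "(\<Sum>i<ord (\<not> b). 1 / weight b (act (\<not> b) i w)) \<le> (2 * ord (\<not> b) + 1) / 6"
proof -
  have "(\<Sum>i<ord (\<not> b). 1 / weight b (act (\<not> b) i w)) =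
      1 / weight b (strip (\<not> b) w) + (\<Sum>e\<in>{1..<ord (\<not> b)}. 1 / weight b ((\<not> b, e) # strip (\<not> b) w))"
    by (rule sum_orbit[OF assms])
  also have "\<dots> \<le> 1 / 2 + (\<Sum>e\<in>{1..<ord (\<not> b)}. 1 / 3)"
    by (simp add: weight_def starts_with_def)
  finally show ?thesis
    using ord_pos[of "\<not> b"] by (simp add: of_nat_diff field_simps)
qed

lemma infsum_inverse_weight_le:
  assumes "y \<in> L" and invariant: "\<And>x j. red x \<Longrightarrow> y (act (\<not> b) j x) = y x"
  shows "(\<Sum>\<^sub>\<infinity>x. (cmod (y x))\<^sup>2 / weight b x) \<le> (2 * ord (\<not> b) + 1) / (6 * ord (\<not> b)) * norm2 y"
proof -
  define h where "h = (\<lambda>x. (cmod (y x))\<^sup>2 / weight b x)"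
  define G where "G x = (if red x then \<Sum>i<ord (\<not> b). h (act (\<not> b) i x) else 0)" for x
  define Q where "Q = (\<lambda>x. (cmod (y x))\<^sup>2)"
  have Q_summable: "Q summable_on UNIV"
    using assms(1) by (simp add: Q_def l2_iff square_summable_def)
  have "h summable_on UNIV"
    by (rule summable_on_comparison_test[OF Q_summable]) (auto simp: h_def Q_def weight_def)
  moreover have "\<not> red x \<Longrightarrow> h x = 0" for x
    using assms(1) by (simp add: h_def l2_zero_outside)
  ultimately have G_summable: "G summable_on UNIV" and G_sum: "infsum G UNIV = ord (\<not> b) * infsum h UNIV"
    unfolding G_def using infsum_orbit_sum by blast+
  have pointwise: "G x \<le> Q x * ((2 * ord (\<not> b) + 1) / 6)" for x
  proof (cases "red x")
    case True
    then have "G x = Q x * (\<Sum>i<ord (\<not> b). 1 / weight b (act (\<not> b) i x))"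
      using invariant by (simp add: G_def h_def Q_def sum_distrib_left)
    also have "\<dots> \<le> Q x * ((2 * ord (\<not> b) + 1) / 6)"
      by (rule mult_left_mono[OF sum_inverse_weight_orbit[OF True]]) (simp add: Q_def)
    finally show ?thesis .
  qed (simp add: G_def Q_def)
  have "ord (\<not> b) * infsum h UNIV \<le> (\<Sum>\<^sub>\<infinity>x. Q x * ((2 * ord (\<not> b) + 1) / 6))"
    unfolding G_sum[symmetric]
    by (rule infsum_mono[OF G_summable summable_on_cmult_left[OF Q_summable]]) (rule pointwise)
  also have "\<dots> = norm2 y * ((2 * ord (\<not> b) + 1) / 6)"
    unfolding norm2_def Q_def by (rule infsum_cmult_left) (use Q_summable Q_def in simp)
  finally show ?thesis
    using ord_pos[of "\<not> b"] by (simp add: h_def field_simps)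
qed

lemma norm2_avg_invariant_le:
  assumes "y \<in> L" and "\<And>x j. red x \<Longrightarrow> y (act (\<not> b) j x) = y x"
  shows "norm2 (avg m n b y) \<le> cos2_bound m n * norm2 y"
proof -
  have "norm2 (avg m n b y) \<le> (2 * ord b + 1) / ord b * (\<Sum>\<^sub>\<infinity>x. (cmod (y x))\<^sup>2 / weight b x)"
    using norm2_avg_le_weighted(2)[OF assms(1), of "weight b" b] sum_weight_orbit
    by (simp add: weight_def)
  also have "\<dots> \<le> (2 * ord b + 1) / ord b * ((2 * ord (\<not> b) + 1) / (6 * ord (\<not> b)) * norm2 y)"
    by (rule mult_left_mono[OF infsum_inverse_weight_le[OF assms]]) (auto intro: divide_nonneg_nonneg)
  also have "\<dots> = cos2_bound m n * norm2 y"
    by (cases b) (simp_all add: cos2_bound_def ord_of_def field_simps)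
  finally show ?thesis .
qed

abbreviation p :: "(word \<Rightarrow> complex) \<Rightarrow> word \<Rightarrow> complex" where "p \<equiv> avg m n False"
abbreviation q :: "(word \<Rightarrow> complex) \<Rightarrow> word \<Rightarrow> complex" where "q \<equiv> avg m n True"

lemma l2_norm_pqp_le:
  assumes "f \<in> L"
  shows "l2_norm (p (q (p f))) \<le> cos2_bound m n * l2_norm f"
proof -
  have c: "0 \<le> cos2_bound m n"
    by (simp add: cos2_bound_def)
  have "l2_norm (p (q (p f))) \<le> sqrt (cos2_bound m n) * l2_norm (q (p f))"
    using norm2_avg_invariant_le[of "q (p f)" False] avg_l2 assms avg_act c
    by (intro l2_norm_le_if_norm2_le) auto
  also have "\<dots> \<le> sqrt (cos2_bound m n) * (sqrt (cos2_bound m n) * l2_norm (p f))"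
    using norm2_avg_invariant_le[of "p f" True] avg_l2 assms avg_act c
    by (intro mult_left_mono l2_norm_le_if_norm2_le) auto
  also have "\<dots> \<le> cos2_bound m n * l2_norm f"
    using l2_norm_avg_le[OF assms, of False] c by (simp add: mult.assoc[symmetric] mult_left_mono)
  finally show ?thesis .
qed

section \<open>Closedness of the sum of the ranges\<close>

lemma iterate_l2_norm_le:
  assumes A_l2: "\<And>f. f \<in> L \<Longrightarrow> A f \<in> L"
    and A_bound: "\<And>f. f \<in> L \<Longrightarrow> l2_norm (A f) \<le> c * l2_norm f"
    and "0 \<le> c" and "y \<in> L"
  shows "(A ^^ j) y \<in> L \<and> l2_norm ((A ^^ j) y) \<le> c ^ j * l2_norm y"
proof (induction j)
  case (Suc j)
  then have IH: "(A ^^ j) y \<in> L" "l2_norm ((A ^^ j) y) \<le> c ^ j * l2_norm y"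
    by auto
  have "l2_norm ((A ^^ Suc j) y) \<le> c * l2_norm ((A ^^ j) y)"
    using A_bound[OF IH(1)] by simp
  also have "\<dots> \<le> c * (c ^ j * l2_norm y)"
    by (rule mult_left_mono[OF IH(2) \<open>0 \<le> c\<close>])
  finally show ?case
    using A_l2[OF IH(1)] by simp
qed (simp add: \<open>y \<in> L\<close>)

lemma neumann_partial_sums_tail:
  assumes A_l2: "\<And>f. f \<in> L \<Longrightarrow> A f \<in> L"
    and A_bound: "\<And>f. f \<in> L \<Longrightarrow> l2_norm (A f) \<le> c * l2_norm f"
    and c: "0 \<le> c" "c < 1" and "y \<in> L" and "k \<le> l"
  shows "l2_norm ((\<Sum>j<l. (A ^^ j) y) - (\<Sum>j<k. (A ^^ j) y)) \<le> c ^ k * (l2_norm y / (1 - c))"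
proof -
  note power = iterate_l2_norm_le[OF A_l2 A_bound c(1) \<open>y \<in> L\<close>]
  have "(\<Sum>j<l. (A ^^ j) y) - (\<Sum>j<k. (A ^^ j) y) = (\<Sum>j\<in>{k..<l}. (A ^^ j) y)"
    using \<open>k \<le> l\<close> by (simp add: lessThan_atLeast0 sum_diff_nat_ivl)
  then have "l2_norm ((\<Sum>j<l. (A ^^ j) y) - (\<Sum>j<k. (A ^^ j) y)) \<le> (\<Sum>j\<in>{k..<l}. l2_norm ((A ^^ j) y))"
    using power by (simp add: l2_norm_sum_le(2) l2_square_summable)
  also have "\<dots> \<le> (\<Sum>j\<in>{k..<l}. c ^ j) * l2_norm y"
    using power by (simp add: sum_distrib_right sum_mono)
  also have "\<dots> \<le> c ^ k / (1 - c) * l2_norm y"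
    by (rule mult_right_mono[OF sum_power_tail_le[OF c] l2_norm_nonneg])
  finally show ?thesis
    by simp
qed

lemma neumann_series_solution:
  assumes A: "Modules.additive A" and A_l2: "\<And>f. f \<in> L \<Longrightarrow> A f \<in> L"
    and A_bound: "\<And>f. f \<in> L \<Longrightarrow> l2_norm (A f) \<le> c * l2_norm f"
    and c: "0 \<le> c" "c < 1" and "y \<in> L"
  obtains x where "x \<in> L" and "x - A x = y"
proof -
  define X where "X k = (\<Sum>j<k. (A ^^ j) y)" for k
  have X_l2: "X k \<in> L" for k
    unfolding X_def using iterate_l2_norm_le[OF A_l2 A_bound c(1) \<open>y \<in> L\<close>] by (intro l2_sum) auto
  have cauchy: "\<exists>K. \<forall>k\<ge>K. \<forall>l\<ge>K. l2_norm (X l - X k) \<le> e" if "0 < e" for e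
    using neumann_partial_sums_tail[OF A_l2 A_bound c \<open>y \<in> L\<close>] c l2_norm_nonneg[of y] \<open>0 < e\<close>
    unfolding X_def by (intro cauchy_if_geometric_tail[where B = "l2_norm y / (1 - c)"]) simp_all
  obtain x where "x \<in> L" and lim: "(\<lambda>k. l2_norm (x - X k)) \<longlonglongrightarrow> 0"
    using l2_complete[of X, OF X_l2 cauchy] by blast
  have step: "X (Suc k) - A (X k) = y" for k
    unfolding X_def Modules.additive.sum[OF A] sum.lessThan_Suc_shift by simp
  have bound: "l2_norm (x - A x - y) \<le> l2_norm (x - X (Suc k)) + c * l2_norm (x - X k)" for k
  proof -
    have eq: "x - A x - y = (x - X (Suc k)) - A (x - X k)"
      using step[of k] Modules.additive.diff[OF A, of x "X k"] by (simp add: algebra_simps)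
    have "l2_norm ((x - X (Suc k)) - A (x - X k)) \<le> l2_norm (x - X (Suc k)) + l2_norm (A (x - X k))"
      using \<open>x \<in> L\<close> X_l2 A_l2 by (intro l2_norm_triangle_diff l2_square_summable l2_diff A_l2)
    then show ?thesis
      unfolding eq using A_bound[OF l2_diff[OF \<open>x \<in> L\<close> X_l2], of k] by linarith
  qed
  have "(\<lambda>k. l2_norm (x - X (Suc k)) + c * l2_norm (x - X k)) \<longlonglongrightarrow> 0 + c * 0"
    by (intro tendsto_intros lim LIMSEQ_Suc)
  then have "l2_norm (x - A x - y) \<le> 0"
    using bound by (intro LIMSEQ_le_const) auto
  moreover have "square_summable (x - A x - y)"
    using \<open>x \<in> L\<close> \<open>y \<in> L\<close> A_l2 by (intro l2_square_summable l2_diff)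
  ultimately have "x - A x - y = 0"
    using l2_norm_nonneg[of "x - A x - y"] l2_norm_eq_0_iff by force
  with \<open>x \<in> L\<close> that show thesis by simp
qed

definition joint_kernel :: "(word \<Rightarrow> complex) set" where
  "joint_kernel = {a \<in> L. p a = 0 \<and> q a = 0}"

definition range_sum :: "(word \<Rightarrow> complex) set" where
  "range_sum = {x + y | x y. x \<in> p ` L \<and> y \<in> q ` L}"

lemma exists_solution_id_minus_pq:
  assumes "cos2_bound m n < 1" and "y \<in> L"
  obtains x where "x \<in> L" and "p x = x" and "x - p (q x) = p y"
proof -
  have "Modules.additive (\<lambda>f. p (q (p f)))"
    by unfold_locales (simp add: avg_add)
  then obtain x where "x \<in> L" and x: "x - p (q (p x)) = p y"
    using neumann_series_solution[of "\<lambda>f. p (q (p f))" "cos2_bound m n" "p y"]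
      avg_l2 l2_norm_pqp_le assms
    by (auto simp: cos2_bound_def)
  then have x': "x = p y + p (q (p x))"
    by (simp add: algebra_simps)
  have "p x = p (p y) + p (p (q (p x)))"
    using arg_cong[where f = p, OF x'] by (simp add: avg_add)
  also have "\<dots> = x"
    using \<open>x \<in> L\<close> assms(2) x' by (simp add: avg_idem avg_l2)
  finally have "p x = x" .
  with \<open>x \<in> L\<close> x show thesis
    using that by simp
qed

lemma joint_kernel_range_sum_decomposition:
  assumes "cos2_bound m n < 1" and "z \<in> L"
  obtains a r where "a \<in> joint_kernel" and "r \<in> range_sum" and "z = a + r"
proof -
  obtain x where "x \<in> L" and px: "p x = x" and x: "x - p (q x) = p (z - q z)"
    using exists_solution_id_minus_pq[OF assms(1) l2_diff[OF assms(2) avg_l2[OF assms(2)]]] .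
  define a where "a = (z - x) - q (z - x)"
  have "p a = (p z - p (q z)) - (x - p (q x))"
    unfolding a_def using px by (simp add: avg_diff)
  then have "a \<in> joint_kernel"
    unfolding joint_kernel_def a_def using x \<open>x \<in> L\<close> assms(2)
    by (simp add: avg_diff avg_idem avg_l2 l2_diff)
  moreover have "x + q (z - x) \<in> range_sum"
  proof -
    have "x \<in> p ` L" and "q (z - x) \<in> q ` L"
      using px \<open>x \<in> L\<close> assms(2) by (auto intro!: image_eqI[of x] l2_diff)
    then show ?thesis
      unfolding range_sum_def by blast
  qed
  moreover have "z = a + (x + q (z - x))"
    by (simp add: a_def)
  ultimately show thesis
    using that by blast
qed

end

section \<open>Orthogonal decompositions of pairs\<close>

definition diagonal :: "'a set \<Rightarrow> ('a \<times> 'a) set" where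
  "diagonal S = {(b, b) | b. b \<in> S}"

definition antidiagonal :: "'a::uminus set \<Rightarrow> ('a \<times> 'a) set" where
  "antidiagonal S = {(a, - a) | a. a \<in> S}"

lemma diagonal_diff:
  fixes S :: "'a::ab_group_add set"
  assumes "\<And>a b. a \<in> S \<Longrightarrow> b \<in> S \<Longrightarrow> a - b \<in> S"
  shows "x \<in> diagonal S \<Longrightarrow> y \<in> diagonal S \<Longrightarrow> x - y \<in> diagonal S"
  using assms by (auto simp: diagonal_def)

lemma antidiagonal_diff:
  fixes S :: "'a::ab_group_add set"
  assumes "\<And>a b. a \<in> S \<Longrightarrow> b \<in> S \<Longrightarrow> a - b \<in> S"
  shows "x \<in> antidiagonal S \<Longrightarrow> y \<in> antidiagonal S \<Longrightarrow> x - y \<in> antidiagonal S"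
  using assms by (auto simp: antidiagonal_def)

context free_product
begin

lemma l2sum_inner_add_right:
  "u \<in> L \<times> L \<Longrightarrow> v \<in> L \<times> L \<Longrightarrow> w \<in> L \<times> L \<Longrightarrow>
    l2sum_inner u (v + w) = l2sum_inner u v + l2sum_inner u w"
  by (auto simp: l2sum_inner_def l2_inner_add_right l2_square_summable)

lemma l2sum_inner_commute: "l2sum_inner v u = cnj (l2sum_inner u v)"
  by (simp add: l2sum_inner_def l2_inner_commute[of "fst v"] l2_inner_commute[of "snd v"])

lemma l2sum_inner_self_eq_0:
  assumes "u \<in> L \<times> L" and "l2sum_inner u u = 0"
  shows "u = 0"
proof -
  have ss: "square_summable (fst u)" "square_summable (snd u)"
    using assms(1) by (auto simp: l2_square_summable)
  then have "norm2 (fst u) + norm2 (snd u) = 0"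
    using assms(2) by (simp add: l2sum_inner_def l2_inner_self flip: of_real_add)
  then have "norm2 (fst u) = 0" "norm2 (snd u) = 0"
    using norm2_nonneg[of "fst u"] norm2_nonneg[of "snd u"] by linarith+
  then show "u = 0"
    using ss by (simp add: norm2_eq_0_iff prod_eq_iff)
qed

lemma orthogonal_sum_eq_0:
  assumes "a \<in> L \<times> L" "b \<in> L \<times> L" "c \<in> L \<times> L"
    and "l2sum_inner a b = 0" "l2sum_inner a c = 0" "l2sum_inner b c = 0"
    and "a + b + c = 0"
  shows "a = 0" and "b = 0" and "c = 0"
proof -
  have "a + b \<in> L \<times> L"
    using assms(1,2) by (auto simp: mem_Times_iff l2_add)
  have expand: "0 = l2sum_inner u a + l2sum_inner u b + l2sum_inner u c" if "u \<in> L \<times> L" for u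
  proof -
    have "0 = l2sum_inner u (a + b + c)"
      by (simp add: assms(7) l2sum_inner_def)
    also have "\<dots> = l2sum_inner u (a + b) + l2sum_inner u c"
      by (rule l2sum_inner_add_right[OF that \<open>a + b \<in> L \<times> L\<close> assms(3)])
    also have "l2sum_inner u (a + b) = l2sum_inner u a + l2sum_inner u b"
      by (rule l2sum_inner_add_right[OF that assms(1,2)])
    finally show ?thesis .
  qed
  have "l2sum_inner a a = 0"
    using expand[OF assms(1)] assms(4,5) by simp
  then show "a = 0"
    using l2sum_inner_self_eq_0 assms(1) by blast
  have "l2sum_inner b b = 0"
    using expand[OF assms(2)] assms(4,6) l2sum_inner_commute[of b a] by simp
  then show "b = 0"
    using l2sum_inner_self_eq_0 assms(2) by blast
  with \<open>a = 0\<close> show "c = 0"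
    using assms(7) by simp
qed

lemma orth_dsum3I:
  assumes "A \<subseteq> L \<times> L" and "B \<subseteq> L \<times> L" and "C \<subseteq> L \<times> L"
    and AB: "\<And>a b. a \<in> A \<Longrightarrow> b \<in> B \<Longrightarrow> l2sum_inner a b = 0"
    and AC: "\<And>a c. a \<in> A \<Longrightarrow> c \<in> C \<Longrightarrow> l2sum_inner a c = 0"
    and BC: "\<And>b c. b \<in> B \<Longrightarrow> c \<in> C \<Longrightarrow> l2sum_inner b c = 0"
    and "\<And>a a'. a \<in> A \<Longrightarrow> a' \<in> A \<Longrightarrow> a - a' \<in> A"
    and "\<And>b b'. b \<in> B \<Longrightarrow> b' \<in> B \<Longrightarrow> b - b' \<in> B"
    and "\<And>c c'. c \<in> C \<Longrightarrow> c' \<in> C \<Longrightarrow> c - c' \<in> C"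
    and spans: "\<And>v. v \<in> L \<times> L \<Longrightarrow> \<exists>a\<in>A. \<exists>b\<in>B. \<exists>c\<in>C. v = a + b + c"
  shows "orth_dsum3 (L \<times> L) A B C"
proof -
  have unique: "\<exists>!abc. fst abc \<in> A \<and> fst (snd abc) \<in> B \<and> snd (snd abc) \<in> C \<and>
      v = fst abc + fst (snd abc) + snd (snd abc)" if v: "v \<in> L \<times> L" for v
  proof -
    obtain a b c where abc: "a \<in> A" "b \<in> B" "c \<in> C" "v = a + b + c"
      using spans[OF v] by blast
    show ?thesis
    proof (rule ex1I[of _ "(a, b, c)"])
      fix t assume t: "fst t \<in> A \<and> fst (snd t) \<in> B \<and> snd (snd t) \<in> C \<and>
          v = fst t + fst (snd t) + snd (snd t)"
      then have diffs: "a - fst t \<in> A" "b - fst (snd t) \<in> B" "c - snd (snd t) \<in> C"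
        using abc assms(7-9) by blast+
      have "(a - fst t) + (b - fst (snd t)) + (c - snd (snd t)) =
          (a + b + c) - (fst t + fst (snd t) + snd (snd t))"
        by (simp add: algebra_simps)
      also have "\<dots> = 0"
        using t abc(4) by simp
      finally have "a - fst t = 0" "b - fst (snd t) = 0" "c - snd (snd t) = 0"
        using orthogonal_sum_eq_0 diffs assms(1-3) AB AC BC by (meson subsetD)+
      then show "t = (a, b, c)"
        by (simp add: prod_eq_iff)
    qed (use abc in simp)
  qed
  show ?thesis
    unfolding orth_dsum3_def by (intro conjI ballI assms(1-3) AB AC BC unique)
qed

lemma antidiagonal_subset: "S \<subseteq> L \<Longrightarrow> antidiagonal S \<subseteq> L \<times> L"
  by (auto simp: antidiagonal_def intro: l2_uminus)

lemma diagonal_subset: "S \<subseteq> L \<Longrightarrow> diagonal S \<subseteq> L \<times> L"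
  by (auto simp: diagonal_def)

lemma l2sum_inner_antidiagonal_diagonal: "x \<in> antidiagonal S \<Longrightarrow> y \<in> diagonal T \<Longrightarrow> l2sum_inner x y = 0"
  by (auto simp: antidiagonal_def diagonal_def l2sum_inner_def)

lemma joint_kernel_eq: "(\<lambda>u. u - p u) ` L \<inter> (\<lambda>u. u - q u) ` L = joint_kernel"
  by (simp only: set_eq_iff Int_iff image_diff_avg_iff joint_kernel_def mem_Collect_eq) blast

lemma joint_kernel_subset: "joint_kernel \<subseteq> L"
  by (auto simp: joint_kernel_def)

lemma range_sum_subset: "range_sum \<subseteq> L"
  by (auto simp: range_sum_def intro: l2_add avg_l2)

lemma joint_kernel_diff: "a \<in> joint_kernel \<Longrightarrow> b \<in> joint_kernel \<Longrightarrow> a - b \<in> joint_kernel"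
  by (simp add: joint_kernel_def l2_diff avg_diff)

lemma range_sum_diff:
  assumes "r \<in> range_sum" and "r' \<in> range_sum"
  shows "r - r' \<in> range_sum"
proof -
  obtain w v w' v' where "w \<in> L" "v \<in> L" "w' \<in> L" "v' \<in> L" "r = p w + q v" "r' = p w' + q v'"
    using assms by (auto simp: range_sum_def)
  then have "r - r' = p (w - w') + q (v - v')" and "w - w' \<in> L" and "v - v' \<in> L"
    by (simp_all add: avg_diff l2_diff)
  then show ?thesis
    unfolding range_sum_def by blast
qed

lemma joint_kernel_orthogonal:
  assumes "a \<in> joint_kernel" and "w \<in> L"
  shows "l2_inner a (p w) = 0" and "l2_inner a (q w) = 0"
  using assms by (simp_all add: joint_kernel_def avg_orthogonal)

lemma joint_kernel_orthogonal_range_sum: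
  assumes "a \<in> joint_kernel" and "r \<in> range_sum"
  shows "l2_inner a r = 0"
proof -
  obtain w v where "w \<in> L" "v \<in> L" "r = p w + q v"
    using assms(2) by (auto simp: range_sum_def)
  with assms(1) show ?thesis
    using joint_kernel_subset
    by (auto simp: l2_inner_add_right joint_kernel_orthogonal avg_l2 l2_square_summable)
qed

lemma diagonal_decomposition:
  assumes "cos2_bound m n < 1" and "u \<in> L \<times> L"
  obtains a r b where "a \<in> joint_kernel" "r \<in> range_sum" "b \<in> L" "u = (a, - a) + (r, - r) + (b, b)"
proof -
  define d where "d = (\<lambda>x. (1 / 2) * (fst u - snd u) x)"
  define b where "b = (\<lambda>x. (1 / 2) * (fst u + snd u) x)"
  have "d \<in> L"
    unfolding d_def using assms(2) by (intro l2_scale l2_diff) auto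
  have "b \<in> L"
    unfolding b_def using assms(2) by (intro l2_scale l2_add) auto
  have "fst u = d + b" and "snd u = b - d"
    by (simp_all add: d_def b_def fun_eq_iff field_simps)
  obtain a r where a: "a \<in> joint_kernel" and r: "r \<in> range_sum" and d: "d = a + r"
    by (rule joint_kernel_range_sum_decomposition[OF assms(1) \<open>d \<in> L\<close>])
  have "u = (a, - a) + (r, - r) + (b, b)"
    using \<open>fst u = d + b\<close> \<open>snd u = b - d\<close> d by (simp add: prod_eq_iff algebra_simps)
  then show thesis
    by (rule that[OF a r \<open>b \<in> L\<close>])
qed

lemma orth_dsum3_diagonal:
  assumes "cos2_bound m n < 1"
  shows "orth_dsum3 (L \<times> L) (antidiagonal joint_kernel) (antidiagonal range_sum) (diagonal L)"
proof (rule orth_dsum3I)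
  show "antidiagonal joint_kernel \<subseteq> L \<times> L" "antidiagonal range_sum \<subseteq> L \<times> L" "diagonal L \<subseteq> L \<times> L"
    by (simp_all add: antidiagonal_subset diagonal_subset joint_kernel_subset range_sum_subset)
  show "l2sum_inner x y = 0" if "x \<in> antidiagonal joint_kernel" and "y \<in> antidiagonal range_sum" for x y
    using that joint_kernel_orthogonal_range_sum by (auto simp: antidiagonal_def l2sum_inner_def)
  show "l2sum_inner x y = 0" if "x \<in> antidiagonal joint_kernel" and "y \<in> diagonal L" for x y
    using that by (rule l2sum_inner_antidiagonal_diagonal)
  show "l2sum_inner x y = 0" if "x \<in> antidiagonal range_sum" and "y \<in> diagonal L" for x y
    using that by (rule l2sum_inner_antidiagonal_diagonal)
  show "x - y \<in> antidiagonal joint_kernel" if "x \<in> antidiagonal joint_kernel" "y \<in> antidiagonal joint_kernel" for x y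
    using joint_kernel_diff that by (rule antidiagonal_diff)
  show "x - y \<in> antidiagonal range_sum" if "x \<in> antidiagonal range_sum" "y \<in> antidiagonal range_sum" for x y
    using range_sum_diff that by (rule antidiagonal_diff)
  show "x - y \<in> diagonal L" if "x \<in> diagonal L" "y \<in> diagonal L" for x y
    using l2_diff that by (rule diagonal_diff)
  show "\<exists>a\<in>antidiagonal joint_kernel. \<exists>r\<in>antidiagonal range_sum. \<exists>b\<in>diagonal L. u = a + r + b"
    if u: "u \<in> L \<times> L" for u
  proof -
    obtain a r b where "a \<in> joint_kernel" "r \<in> range_sum" "b \<in> L" "u = (a, - a) + (r, - r) + (b, b)"
      by (rule diagonal_decomposition[OF assms u])
    then show ?thesis
      unfolding antidiagonal_def diagonal_def
      by (intro bexI[of _ "(a, - a)"] bexI[of _ "(r, - r)"] bexI[of _ "(b, b)"]) auto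
  qed
qed

lemma antidiagonal_diagonal_eq_projections:
  assumes "w \<in> L" and "v \<in> L" and "b \<in> L"
  defines "u \<equiv> b + q v - p w"
  shows "(p w + q v, - (p w + q v)) + (b, b) = (p (b + w + q v), q (b - v - p w)) + (u - p u, u - q u)"
  using assms by (simp add: avg_add avg_diff avg_idem algebra_simps)

lemma l2sum_inner_antidiagonal_projections:
  assumes "a \<in> joint_kernel" and "w \<in> L" and "v \<in> L"
  shows "l2sum_inner (a, - a) (p w, q v) = 0"
  using assms by (simp add: l2sum_inner_def joint_kernel_orthogonal)

lemma l2sum_inner_antidiagonal_complements:
  assumes "a \<in> joint_kernel" and "u \<in> L"
  shows "l2sum_inner (a, - a) (u - p u, u - q u) = 0"
  using assms joint_kernel_subset
  by (auto simp: l2sum_inner_def l2_inner_diff_right joint_kernel_orthogonal avg_l2 l2_square_summable)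

lemma l2sum_inner_projections_complements:
  assumes "w \<in> L" and "v \<in> L" and "u \<in> L"
  shows "l2sum_inner (p w, q v) (u - p u, u - q u) = 0"
  using assms by (simp add: l2sum_inner_def avg_self_adjoint avg_diff_self l2_diff avg_l2)

lemma projections_decomposition:
  assumes "cos2_bound m n < 1" and "z \<in> L \<times> L"
  obtains a w v u where "a \<in> joint_kernel" "w \<in> L" "v \<in> L" "u \<in> L"
    and "z = (a, - a) + (p w, q v) + (u - p u, u - q u)"
proof -
  obtain a r b where "a \<in> joint_kernel" "r \<in> range_sum" "b \<in> L" and z: "z = (a, - a) + (r, - r) + (b, b)"
    by (rule diagonal_decomposition[OF assms])
  moreover obtain w v where "w \<in> L" "v \<in> L" "r = p w + q v"
    using \<open>r \<in> range_sum\<close> by (auto simp: range_sum_def)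
  ultimately show thesis
    using antidiagonal_diagonal_eq_projections[of w v b]
    by (intro that[of a "b + w + q v" "b - v - p w" "b + q v - p w"])
       (simp_all add: add.assoc l2_add l2_diff avg_l2)
qed

lemma orth_dsum3_projections:
  assumes "cos2_bound m n < 1"
  shows "orth_dsum3 (L \<times> L) (antidiagonal joint_kernel) (p ` L \<times> q ` L) ((\<lambda>u. (u - p u, u - q u)) ` L)"
proof (rule orth_dsum3I)
  show "antidiagonal joint_kernel \<subseteq> L \<times> L"
    by (simp add: antidiagonal_subset joint_kernel_subset)
  show "p ` L \<times> q ` L \<subseteq> L \<times> L" "(\<lambda>u. (u - p u, u - q u)) ` L \<subseteq> L \<times> L"
    by (auto intro: avg_l2 l2_diff)
  show "l2sum_inner x y = 0" if "x \<in> antidiagonal joint_kernel" and "y \<in> p ` L \<times> q ` L" for x y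
    using that l2sum_inner_antidiagonal_projections by (auto simp: antidiagonal_def)
  show "l2sum_inner x y = 0"
    if "x \<in> antidiagonal joint_kernel" and "y \<in> (\<lambda>u. (u - p u, u - q u)) ` L" for x y
    using that l2sum_inner_antidiagonal_complements by (auto simp: antidiagonal_def)
  show "l2sum_inner x y = 0" if "x \<in> p ` L \<times> q ` L" and "y \<in> (\<lambda>u. (u - p u, u - q u)) ` L" for x y
    using that l2sum_inner_projections_complements by auto
  show "x - y \<in> antidiagonal joint_kernel" if "x \<in> antidiagonal joint_kernel" "y \<in> antidiagonal joint_kernel" for x y
    using joint_kernel_diff that by (rule antidiagonal_diff)
  show "x - y \<in> p ` L \<times> q ` L" if "x \<in> p ` L \<times> q ` L" and "y \<in> p ` L \<times> q ` L" for x y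
    using that by (auto simp: avg_diff[symmetric] intro!: imageI l2_diff)
  show "x - y \<in> (\<lambda>u. (u - p u, u - q u)) ` L"
    if x: "x \<in> (\<lambda>u. (u - p u, u - q u)) ` L" and y: "y \<in> (\<lambda>u. (u - p u, u - q u)) ` L" for x y
  proof -
    obtain u u' where "u \<in> L" "u' \<in> L" "x = (u - p u, u - q u)" "y = (u' - p u', u' - q u')"
      using x y by blast
    then show ?thesis
      by (intro image_eqI[where x = "u - u'"]) (simp_all add: avg_diff l2_diff)
  qed
  show "\<exists>a\<in>antidiagonal joint_kernel. \<exists>c\<in>p ` L \<times> q ` L. \<exists>d\<in>(\<lambda>u. (u - p u, u - q u)) ` L. z = a + c + d"
    if z: "z \<in> L \<times> L" for z
  proof -
    obtain a w v u where "a \<in> joint_kernel" "w \<in> L" "v \<in> L" "u \<in> L"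
      and "z = (a, - a) + (p w, q v) + (u - p u, u - q u)"
      by (rule projections_decomposition[OF assms z])
    then show ?thesis
      unfolding antidiagonal_def
      by (intro bexI[of _ "(a, - a)"] bexI[of _ "(p w, q v)"] bexI[of _ "(u - p u, u - q u)"]) auto
  qed
qed

lemma antidiagonal_image_inter_eq:
  "{(a, - a) | a. a \<in> (\<lambda>u. u - p u) ` L \<inter> (\<lambda>u. u - q u) ` L} = antidiagonal joint_kernel"
  by (simp only: joint_kernel_eq antidiagonal_def)

lemma projection_pairs_eq: "{(p w, q v) | v w. v \<in> L \<and> w \<in> L} = p ` L \<times> q ` L"
  by blast

lemma complement_pairs_eq: "{(u - p u, u - q u) | u. u \<in> L} = (\<lambda>u. (u - p u, u - q u)) ` L"
  by blast

end

theorem lemma4p7: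
  fixes m n :: nat
  assumes "m \<ge> 2" and "n \<ge> 3"
  defines "L \<equiv> l2 m n"
  defines "p \<equiv> pP m n" and "q \<equiv> qQ m n"
  defines "H1 \<equiv> {(a, - a) | a. a \<in> (\<lambda>u. u - p u) ` L \<inter> (\<lambda>u. u - q u) ` L}"
  defines "H2 \<equiv> {(c, - c) | c. c \<in> {x + y | x y. x \<in> p ` L \<and> y \<in> q ` L}}"
  defines "H2' \<equiv> {(p w, q v) | v w. v \<in> L \<and> w \<in> L}"
  defines "H3 \<equiv> {(b, b) | b. b \<in> L}"
  defines "H3' \<equiv> {(u - p u, u - q u) | u. u \<in> L}"
  shows "orth_dsum3 (L \<times> L) H1 H2 H3 \<and> orth_dsum3 (L \<times> L) H1 H2' H3'"
proof -
  interpret free_product m n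
    using assms(1,2) by unfold_locales auto
  have bound: "cos2_bound m n < 1"
    using assms(1,2) by (rule cos2_bound_less_1)
  have "H1 = antidiagonal joint_kernel" and "H2 = antidiagonal range_sum" and "H3 = diagonal L"
    and "H2' = p ` L \<times> q ` L" and "H3' = (\<lambda>u. (u - p u, u - q u)) ` L"
    unfolding H1_def H2_def H3_def H2'_def H3'_def p_def q_def pP_def qQ_def L_def
    by (simp_all only: antidiagonal_image_inter_eq projection_pairs_eq complement_pairs_eq)
       (simp_all add: antidiagonal_def diagonal_def range_sum_def)
  then show ?thesis
    using orth_dsum3_diagonal[OF bound] orth_dsum3_projections[OF bound]
    unfolding p_def q_def pP_def qQ_def L_def by simp
qed

end
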